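(* For all $n\ge1$, $$q_n=\frac12nH_n-\frac12P_n,\qquad r_n=\frac12nP_n-\frac12P_n=\frac{n-1}{2}P_n.$$
   Context: Let $s=\sqrt3/2$. Consider the standard triangular lattice in the plane whose vertices are the points $(a+b/2,\,bs)$ with $a,b\in\mathbb Z$ and whose edges are the unit segments joining lattice points in the directions $0^\circ,60^\circ,120^\circ$; it divides the plane into unit equilateral triangles called cells. A small tile is a single cell; a large tile is an equilateral triangle of side $2$ whose vertices are lattice points (so it is a union of $4$ cells; it may point up or down). For a region $R$ that is a finite union of cells, a tiling of $R$ is a finite set of small and large tiles, each contained in $R$, with pairwise disjoint interiors and union equal to $R$. For $n\ge1$, the region $H_n$ is the union of the trapezoid with vertices $(0,0),(n,0),(n-\tfrac12,s),(\tfrac12,s)$ and the trapezoid with vertices $(\tfrac12,s),(n-\tfrac12,s),(n,2s),(0,2s)$ ($4n-2$ cells; for $n=1$ two unit triangles meeting at a point), and $P_n$ is $H_n$ with the cell with vertices $(n-1,0),(n,0),(n-\tfrac12,s)$ removed. $H_n$ and $P_n$ also denote the numbers of tilings of these regions; thus $H_n=\frac{(1+\sqrt2)^n+(1-\sqrt2)^n}{2}$ and $P_n=\frac{(1+\sqrt2)^n-(1-\sqrt2)^n}{2\sqrt2}$. Define $q_n$ (resp. $r_n$) as the sum, over all tilings of $H_n$ (resp. $P_n$), of the number of large tiles in the tiling. *)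

theory Defs
  imports Complex_Main
begin

text \<open>Lattice coordinates: the lattice point (a,b) is the planar point (a + b/2, b*sqrt 3/2).
  Cells are encoded combinatorially:
  Up a b   = triangle with lattice vertices (a,b), (a+1,b), (a,b+1);
  Down a b = triangle with lattice vertices (a+1,b), (a,b+1), (a+1,b+1).
  Every cell of the triangular lattice is exactly one of these.
  A region (finite union of cells) is represented by its finite set of cells; a tile by the
  set of cells it consists of. Two tiles have disjoint interiors iff their cell sets are disjoint.\<close>

datatype cell = Up int int | Down int int

definition small_tile :: "cell set \<Rightarrow> bool" where
  "small_tile t \<longleftrightarrow> (\<exists>c. t = {c})"

text \<open>Large upward tile with lattice vertices (a,b),(a+2,b),(a,b+2).\<close>
definition large_up :: "int \<Rightarrow> int \<Rightarrow> cell set" where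
  "large_up a b = {Up a b, Up (a+1) b, Up a (b+1), Down a b}"

text \<open>Large downward tile with lattice vertices (a+2,b),(a,b+2),(a+2,b+2).\<close>
definition large_down :: "int \<Rightarrow> int \<Rightarrow> cell set" where
  "large_down a b = {Down (a+1) b, Down a (b+1), Down (a+1) (b+1), Up (a+1) (b+1)}"

definition large_tile :: "cell set \<Rightarrow> bool" where
  "large_tile t \<longleftrightarrow> (\<exists>a b. t = large_up a b \<or> t = large_down a b)"

definition is_tiling :: "cell set \<Rightarrow> cell set set \<Rightarrow> bool" where
  "is_tiling R T \<longleftrightarrow> finite T \<and>
     (\<forall>t\<in>T. (small_tile t \<or> large_tile t) \<and> t \<subseteq> R) \<and>
     pairwise disjnt T \<and> \<Union>T = R"

definition tilings :: "cell set \<Rightarrow> cell set set set" where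
  "tilings R = {T. is_tiling R T}"

definition num_tilings :: "cell set \<Rightarrow> nat" where
  "num_tilings R = card (tilings R)"

definition num_large :: "cell set set \<Rightarrow> nat" where
  "num_large T = card {t\<in>T. large_tile t}"

definition total_large :: "cell set \<Rightarrow> nat" where
  "total_large R = (\<Sum>T\<in>tilings R. num_large T)"

text \<open>The region H_n: bottom row (trapezoid (0,0),(n,0),(n-1/2,s),(1/2,s)) consists of
  Up a 0 (0 \<le> a \<le> n-1) and Down a 0 (0 \<le> a \<le> n-2); top row
  (trapezoid (1/2,s),(n-1/2,s),(n,2s),(0,2s)) consists of Up a 1 (0 \<le> a \<le> n-2) and
  Down a 1 (-1 \<le> a \<le> n-2).\<close>
definition H_region :: "nat \<Rightarrow> cell set" where
  "H_region n =
     {Up a 0 | a. 0 \<le> a \<and> a \<le> int n - 1} \<union> {Down a 0 | a. 0 \<le> a \<and> a \<le> int n - 2} \<union>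
     {Up a 1 | a. 0 \<le> a \<and> a \<le> int n - 2} \<union> {Down a 1 | a. -1 \<le> a \<and> a \<le> int n - 2}"

text \<open>P_n: H_n minus the cell with vertices (n-1,0),(n,0),(n-1/2,s), i.e. Up (n-1) 0.\<close>
definition P_region :: "nat \<Rightarrow> cell set" where
  "P_region n = H_region n - {Up (int n - 1) 0}"

definition H :: "nat \<Rightarrow> nat" where "H n = num_tilings (H_region n)"
definition P :: "nat \<Rightarrow> nat" where "P n = num_tilings (P_region n)"
definition q :: "nat \<Rightarrow> nat" where "q n = total_large (H_region n)"
definition r :: "nat \<Rightarrow> nat" where "r n = total_large (P_region n)"

end

theory Submission
  imports Defs
begin

text \<open>Small tiles merely fill the cells left over, so tilings correspond to sets of pairwise
  disjoint large tiles. In \<open>H (m + 1)\<close> the large tiles come in overlapping pairs, an upward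
  and a downward one, at positions \<open>0, \<dots>, m - 1\<close>, and two tiles of the same orientation
  overlap exactly at adjacent positions; removing the last upward cell of the bottom row forbids
  the last upward tile. Splitting by the orientation of a tile at the last position gives the
  recurrences, and induction shows that with \<open>T\<close> packings carrying \<open>S\<close> tiles in total,
  \<open>E\<close> of which end with a given orientation and carry \<open>S\<^sub>E\<close> tiles,
  \<open>2 S = m T + E\<close> and \<open>2 S\<^sub>E = (m + 1) E\<close>. As \<open>P (m + 1) = T - E\<close> and
  \<open>r (m + 1) = S - S\<^sub>E\<close>, this is \<open>2 q + P = (m + 1) H\<close> and \<open>2 r = m P\<close>.\<close>

section \<open>Tilings as packings of large tiles\<close>

definition large_packings :: "cell set \<Rightarrow> cell set set set" where
  "large_packings R = {L. L \<subseteq> {t. large_tile t \<and> t \<subseteq> R} \<and> pairwise disjnt L}"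

lemma large_tile_not_small_tile: "large_tile t \<Longrightarrow> \<not> small_tile t"
  unfolding large_tile_def small_tile_def large_up_def large_down_def
  by (auto simp: insert_eq_iff)

lemma is_tiling_eq_large_Un_singletons:
  assumes "is_tiling R T"
  shows "T = {t\<in>T. large_tile t} \<union> (\<lambda>c. {c}) ` (R - \<Union>{t\<in>T. large_tile t})"
proof -
  have tiles: "\<And>t. t \<in> T \<Longrightarrow> (small_tile t \<or> large_tile t) \<and> t \<subseteq> R"
    and disj: "pairwise disjnt T" and cover: "\<Union>T = R"
    using assms by (auto simp: is_tiling_def)
  have small_iff: "{c} \<in> T \<longleftrightarrow> c \<in> R - \<Union>{t\<in>T. large_tile t}" for c
  proof
    assume c: "{c} \<in> T"
    have "c \<notin> l" if "l \<in> T" "large_tile l" for l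
    proof -
      have "l \<noteq> {c}"
        using large_tile_not_small_tile[OF \<open>large_tile l\<close>] by (auto simp: small_tile_def)
      then show ?thesis using pairwiseD[OF disj that(1) c] by simp
    qed
    then show "c \<in> R - \<Union>{t\<in>T. large_tile t}" using c cover by auto
  next
    assume "c \<in> R - \<Union>{t\<in>T. large_tile t}"
    then obtain s where "s \<in> T" "c \<in> s" "\<not> large_tile s" using cover by auto
    then show "{c} \<in> T" using tiles by (auto simp: small_tile_def)
  qed
  have "T = {t\<in>T. large_tile t} \<union> {t\<in>T. small_tile t}"
    using tiles large_tile_not_small_tile by blast
  also have "{t\<in>T. small_tile t} = (\<lambda>c. {c}) ` (R - \<Union>{t\<in>T. large_tile t})"
    using small_iff by (auto simp: small_tile_def)
  finally show ?thesis .
qed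

lemma is_tiling_large_packing_Un_singletons:
  assumes "finite R" "L \<in> large_packings R"
  shows "is_tiling R (L \<union> (\<lambda>c. {c}) ` (R - \<Union>L))"
proof -
  have L: "L \<subseteq> Pow R" "\<And>t. t \<in> L \<Longrightarrow> large_tile t" "pairwise disjnt L"
    using assms(2) by (auto simp: large_packings_def)
  have "finite L" using L(1) assms(1) by (meson finite_Pow_iff finite_subset)
  moreover have "pairwise disjnt (L \<union> (\<lambda>c. {c}) ` (R - \<Union>L))"
    using L(3) by (auto simp: pairwise_def disjnt_def)
  ultimately show ?thesis
    using assms(1) L by (auto simp: is_tiling_def small_tile_def)
qed

lemma bij_betw_tilings_large_packings:
  assumes "finite R"
  shows "bij_betw (\<lambda>T. {t\<in>T. large_tile t}) (tilings R) (large_packings R)"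
proof (rule bij_betw_byWitness[where f' = "\<lambda>L. L \<union> (\<lambda>c. {c}) ` (R - \<Union>L)"])
  show "\<forall>T\<in>tilings R. {t\<in>T. large_tile t} \<union> (\<lambda>c. {c}) ` (R - \<Union>{t\<in>T. large_tile t}) = T"
    using is_tiling_eq_large_Un_singletons by (auto simp: tilings_def)
  show "\<forall>L\<in>large_packings R. {t \<in> L \<union> (\<lambda>c. {c}) ` (R - \<Union>L). large_tile t} = L"
    using large_tile_not_small_tile by (auto simp: large_packings_def small_tile_def)
  show "(\<lambda>T. {t\<in>T. large_tile t}) ` tilings R \<subseteq> large_packings R"
    by (auto simp: large_packings_def tilings_def is_tiling_def pairwise_def)
  show "(\<lambda>L. L \<union> (\<lambda>c. {c}) ` (R - \<Union>L)) ` large_packings R \<subseteq> tilings R"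
    using is_tiling_large_packing_Un_singletons[OF assms] by (auto simp: tilings_def)
qed

lemma num_tilings_eq_card_large_packings:
  "finite R \<Longrightarrow> num_tilings R = card (large_packings R)"
  unfolding num_tilings_def by (rule bij_betw_same_card[OF bij_betw_tilings_large_packings])

lemma total_large_eq_sum_card_large_packings:
  "finite R \<Longrightarrow> total_large R = (\<Sum>L\<in>large_packings R. card L)"
  unfolding total_large_def num_large_def
  by (rule sum.reindex_bij_betw[OF bij_betw_tilings_large_packings])

section \<open>The large tiles of the strip\<close>

datatype orientation = Upward | Downward

lemma UNIV_orientation: "UNIV = {Upward, Downward}"
  using orientation.exhaust by auto

text \<open>Indexed so that the two tiles at position \<open>a\<close> overlap (both contain \<open>Down a 0\<close>):
  a packing is then a word in which no orientation occurs at two adjacent positions.\<close>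
fun strip_tile :: "orientation \<Rightarrow> nat \<Rightarrow> cell set" where
  "strip_tile Upward a = large_up (int a) 0"
| "strip_tile Downward a = large_down (int a - 1) 0"

definition strip_tiles :: "nat \<Rightarrow> cell set set" where
  "strip_tiles m = {strip_tile d a | d a. a < m}"

definition strip_packings :: "nat \<Rightarrow> cell set set set" where
  "strip_packings m = {L. L \<subseteq> strip_tiles m \<and> pairwise disjnt L}"

text \<open>For \<open>m = 0\<close> the truncated \<open>m - 1\<close> is harmless, as then \<open>strip_tiles m\<close> is empty.\<close>
definition ends_with :: "orientation \<Rightarrow> nat \<Rightarrow> cell set set \<Rightarrow> bool" where
  "ends_with d m L \<longleftrightarrow> strip_tile d (m - 1) \<in> L"

lemma strip_tilesE:
  assumes "t \<in> strip_tiles m"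
  obtains d a where "a < m" "t = strip_tile d a"
  using assms unfolding strip_tiles_def by blast

lemma strip_tile_eq_iff [simp]: "strip_tile d a = strip_tile d' b \<longleftrightarrow> d = d' \<and> a = b"
proof
  assume "strip_tile d a = strip_tile d' b"
  moreover have "Down (int a) 0 \<in> strip_tile d a" "Up (int a) 0 \<in> strip_tile Upward a"
    "Up (int a) 0 \<notin> strip_tile Downward b" "Down (int a - 1) 1 \<in> strip_tile Downward a"
    by (cases d; auto simp: large_up_def large_down_def)+
  ultimately show "d = d' \<and> a = b"
    by (cases d; cases d') (auto simp: large_up_def large_down_def)
qed simp

lemma disjnt_strip_tile_iff:
  "disjnt (strip_tile d a) (strip_tile d' b) \<longleftrightarrow>
     (if d = d' then a \<noteq> b \<and> a \<noteq> Suc b \<and> b \<noteq> Suc a else a \<noteq> b)"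
  by (cases d; cases d'; simp add: large_up_def large_down_def del: disjnt_insert2; arith)

lemma strip_tiles_overlap_at_same_position: "\<not> disjnt (strip_tile d a) (strip_tile d' a)"
  by (simp only: disjnt_strip_tile_iff) simp

lemma mem_H_region_iff:
  "c \<in> H_region n \<longleftrightarrow> (case c of
     Up a b \<Rightarrow> (b = 0 \<and> 0 \<le> a \<and> a \<le> int n - 1) \<or> (b = 1 \<and> 0 \<le> a \<and> a \<le> int n - 2)
   | Down a b \<Rightarrow> (b = 0 \<and> 0 \<le> a \<and> a \<le> int n - 2) \<or> (b = 1 \<and> -1 \<le> a \<and> a \<le> int n - 2))"
  by (cases c) (auto simp: H_region_def)

lemma finite_H_region: "finite (H_region n)"
proof -
  have "H_region n \<subseteq> (\<lambda>a. Up a 0) ` {0..int n} \<union> (\<lambda>a. Down a 0) ` {0..int n}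
     \<union> (\<lambda>a. Up a 1) ` {0..int n} \<union> (\<lambda>a. Down a 1) ` {-1..int n}"
    by (auto simp: H_region_def)
  then show ?thesis by (rule finite_subset) auto
qed

lemma finite_P_region: "finite (P_region n)"
  using finite_H_region by (simp add: P_region_def)

lemma large_tile_subset_H_region_iff:
  "large_tile t \<and> t \<subseteq> H_region (Suc m) \<longleftrightarrow> t \<in> strip_tiles m"
proof
  assume "large_tile t \<and> t \<subseteq> H_region (Suc m)"
  then obtain a b where "t = large_up a b \<or> t = large_down a b" and sub: "t \<subseteq> H_region (Suc m)"
    by (auto simp: large_tile_def)
  then consider "t = large_up a b" | "t = large_down a b" by blast
  then show "t \<in> strip_tiles m"
  proof cases
    case 1
    with sub have "b = 0" "0 \<le> a" "a < int m" by (auto simp: large_up_def mem_H_region_iff)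
    then have "t = strip_tile Upward (nat a)" "nat a < m" using 1 by auto
    then show ?thesis unfolding strip_tiles_def by blast
  next
    case 2
    with sub have "b = 0" "0 \<le> a + 1" "a + 1 < int m" by (auto simp: large_down_def mem_H_region_iff)
    then have "t = strip_tile Downward (nat (a + 1))" "nat (a + 1) < m" using 2 by auto
    then show ?thesis unfolding strip_tiles_def by blast
  qed
next
  assume "t \<in> strip_tiles m"
  then obtain d a where a: "a < m" and t: "t = strip_tile d a" by (rule strip_tilesE)
  have "large_tile t" unfolding t large_tile_def by (cases d) auto
  moreover have "t \<subseteq> H_region (Suc m)"
    unfolding t using a by (cases d) (auto simp: large_up_def large_down_def mem_H_region_iff)
  ultimately show "large_tile t \<and> t \<subseteq> H_region (Suc m)" ..
qed

lemma large_tile_subset_P_region_iff: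
  "large_tile t \<and> t \<subseteq> P_region (Suc m) \<longleftrightarrow> t \<in> strip_tiles m \<and> t \<noteq> strip_tile Upward (m - 1)"
proof -
  have "Up (int m) 0 \<in> t \<longleftrightarrow> t = strip_tile Upward (m - 1)" if t: "t \<in> strip_tiles m"
  proof -
    from t obtain d a where a: "a < m" and t: "t = strip_tile d a" by (rule strip_tilesE)
    then have "Up (int m) 0 \<in> t \<longleftrightarrow> d = Upward \<and> a = m - 1"
      by (cases d) (auto simp: large_up_def large_down_def)
    then show ?thesis by (simp only: t strip_tile_eq_iff)
  qed
  moreover have "t \<subseteq> P_region (Suc m) \<longleftrightarrow> t \<subseteq> H_region (Suc m) \<and> Up (int m) 0 \<notin> t"
    by (auto simp: P_region_def)
  ultimately show ?thesis
    using large_tile_subset_H_region_iff[of t m] by blast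
qed

lemma large_packings_H_region: "large_packings (H_region (Suc m)) = strip_packings m"
proof -
  have "{t. large_tile t \<and> t \<subseteq> H_region (Suc m)} = strip_tiles m"
    using large_tile_subset_H_region_iff by blast
  then show ?thesis by (simp add: large_packings_def strip_packings_def)
qed

lemma large_packings_P_region:
  "large_packings (P_region (Suc m)) = {L \<in> strip_packings m. \<not> ends_with Upward m L}"
proof -
  have "{t. large_tile t \<and> t \<subseteq> P_region (Suc m)} = strip_tiles m - {strip_tile Upward (m - 1)}"
    using large_tile_subset_P_region_iff by blast
  then show ?thesis
    by (auto simp: large_packings_def strip_packings_def ends_with_def simp del: strip_tile.simps)
qed

section \<open>Counting packings by their last tile\<close>

lemma strip_tiles_Suc: "strip_tiles (Suc m) = strip_tiles m \<union> range (\<lambda>d. strip_tile d m)"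
  by (auto simp: strip_tiles_def less_Suc_eq simp del: strip_tile.simps)

lemma strip_tile_notin_strip_tiles: "strip_tile d m \<notin> strip_tiles m"
  by (auto simp: strip_tiles_def simp del: strip_tile.simps)

lemma finite_strip_tiles: "finite (strip_tiles m)"
proof -
  have "strip_tiles m = (\<lambda>(d, a). strip_tile d a) ` (UNIV \<times> {..<m})"
    by (auto simp: strip_tiles_def simp del: strip_tile.simps)
  then show ?thesis by (simp add: UNIV_orientation)
qed

lemma finite_strip_packings: "finite (strip_packings m)"
  by (rule finite_subset[of _ "Pow (strip_tiles m)"]) (auto simp: strip_packings_def finite_strip_tiles)

lemma finite_strip_packing: "L \<in> strip_packings m \<Longrightarrow> finite L"
  using finite_strip_tiles by (auto simp: strip_packings_def intro: finite_subset)

lemma disjnt_strip_tile_packing_iff: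
  assumes "L \<in> strip_packings m"
  shows "(\<forall>t\<in>L. disjnt (strip_tile d m) t) \<longleftrightarrow> \<not> ends_with d m L"
proof -
  have "disjnt (strip_tile d m) t \<longleftrightarrow> t \<noteq> strip_tile d (m - 1)" if "t \<in> strip_tiles m" for t
  proof -
    from that obtain d' a where "a < m" "t = strip_tile d' a" by (rule strip_tilesE)
    then show ?thesis by (auto simp: disjnt_strip_tile_iff simp del: strip_tile.simps)
  qed
  then show ?thesis
    using assms by (auto simp: strip_packings_def ends_with_def simp del: strip_tile.simps)
qed

lemma strip_packings_Suc_ending:
  "{L \<in> strip_packings (Suc m). ends_with d (Suc m) L} =
     insert (strip_tile d m) ` {L \<in> strip_packings m. \<not> ends_with d m L}"
proof (intro equalityI subsetI)
  fix L assume "L \<in> {L \<in> strip_packings (Suc m). ends_with d (Suc m) L}"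
  then have L: "L \<subseteq> strip_tiles (Suc m)" "pairwise disjnt L" "strip_tile d m \<in> L"
    by (auto simp: strip_packings_def ends_with_def simp del: strip_tile.simps)
  define L' where "L' = L - {strip_tile d m}"
  have disj: "\<forall>t\<in>L'. disjnt (strip_tile d m) t"
    using L(2,3) by (auto simp: L'_def pairwise_def)
  have "strip_tile d' m \<notin> L'" for d'
    using disj strip_tiles_overlap_at_same_position by blast
  then have "L' \<subseteq> strip_tiles m"
    using L(1) unfolding strip_tiles_Suc L'_def by blast
  moreover have "pairwise disjnt L'"
    using L(2) unfolding L'_def by (rule pairwise_subset) blast
  ultimately have L': "L' \<in> strip_packings m" unfolding strip_packings_def by blast
  with disj have "\<not> ends_with d m L'" by (simp add: disjnt_strip_tile_packing_iff)
  moreover have "L = insert (strip_tile d m) L'"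
    using L(3) by (auto simp: L'_def)
  ultimately show "L \<in> insert (strip_tile d m) ` {L \<in> strip_packings m. \<not> ends_with d m L}"
    using L' by blast
next
  fix L assume "L \<in> insert (strip_tile d m) ` {L \<in> strip_packings m. \<not> ends_with d m L}"
  then obtain L' where L': "L' \<in> strip_packings m" "\<not> ends_with d m L'"
    and L: "L = insert (strip_tile d m) L'" by blast
  have disj: "\<forall>t\<in>L'. disjnt (strip_tile d m) t"
    using disjnt_strip_tile_packing_iff L' by blast
  have "L \<subseteq> strip_tiles (Suc m)"
    using L' unfolding L strip_tiles_Suc strip_packings_def by blast
  moreover have "pairwise disjnt L"
    using L' disj disjnt_sym unfolding L strip_packings_def pairwise_insert by blast
  moreover have "ends_with d (Suc m) L"
    unfolding L ends_with_def by simp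
  ultimately show "L \<in> {L \<in> strip_packings (Suc m). ends_with d (Suc m) L}"
    unfolding strip_packings_def by blast
qed

lemma strip_packings_Suc_not_ending:
  "{L \<in> strip_packings (Suc m). \<not> ends_with Upward (Suc m) L \<and> \<not> ends_with Downward (Suc m) L}
     = strip_packings m"
proof -
  have "strip_tiles (Suc m) =
      insert (strip_tile Upward m) (insert (strip_tile Downward m) (strip_tiles m))"
    by (simp add: strip_tiles_Suc UNIV_orientation insert_commute)
  then have "L \<subseteq> strip_tiles (Suc m) \<and> strip_tile Upward m \<notin> L \<and> strip_tile Downward m \<notin> L
      \<longleftrightarrow> L \<subseteq> strip_tiles m" for L
    using strip_tile_notin_strip_tiles[of _ m]
    by (auto simp add: subset_insert simp del: strip_tile.simps)
  then show ?thesis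
    unfolding strip_packings_def ends_with_def diff_Suc_1 by blast
qed

lemma not_ends_with_both:
  assumes "L \<in> strip_packings m"
  shows "\<not> (ends_with Upward m L \<and> ends_with Downward m L)"
proof
  assume "ends_with Upward m L \<and> ends_with Downward m L"
  then have "disjnt (strip_tile Upward (m - 1)) (strip_tile Downward (m - 1))"
    using assms by (auto simp: strip_packings_def ends_with_def pairwise_def simp del: strip_tile.simps)
  then show False using strip_tiles_overlap_at_same_position by blast
qed

lemma sum_filter_split:
  "finite A \<Longrightarrow> sum f A = sum f {x \<in> A. Q x} + sum f {x \<in> A. \<not> Q x}"
  by (subst sum.union_disjoint[symmetric]) (auto intro: sum.cong)

lemma strip_tile_notin_strip_packing: "L \<in> strip_packings m \<Longrightarrow> strip_tile d m \<notin> L"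
  using strip_tile_notin_strip_tiles by (auto simp: strip_packings_def)

lemma sum_strip_packings_Suc:
  "sum f (strip_packings (Suc m)) = sum f (strip_packings m)
     + sum f {L \<in> strip_packings (Suc m). ends_with Upward (Suc m) L}
     + sum f {L \<in> strip_packings (Suc m). ends_with Downward (Suc m) L}"
proof -
  let ?T = "strip_packings (Suc m)"
  let ?U = "{L \<in> ?T. ends_with Upward (Suc m) L}"
    and ?D = "{L \<in> ?T. ends_with Downward (Suc m) L}"
  have "sum f ?T = sum f {L \<in> ?T. \<not> ends_with Upward (Suc m) L \<and> \<not> ends_with Downward (Suc m) L}
      + sum f {L \<in> ?T. \<not> (\<not> ends_with Upward (Suc m) L \<and> \<not> ends_with Downward (Suc m) L)}"
    by (rule sum_filter_split[OF finite_strip_packings])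
  also have "{L \<in> ?T. \<not> (\<not> ends_with Upward (Suc m) L \<and> \<not> ends_with Downward (Suc m) L)}
      = ?U \<union> ?D"
    by blast
  also have "sum f (?U \<union> ?D) = sum f ?U + sum f ?D"
    using not_ends_with_both[of _ "Suc m"] finite_strip_packings by (intro sum.union_disjoint) auto
  finally show ?thesis by (simp add: strip_packings_Suc_not_ending add.assoc)
qed

lemma inj_on_insert_strip_tile: "inj_on (insert (strip_tile d m)) (strip_packings m)"
  using strip_tile_notin_strip_packing by (intro inj_onI) (metis insert_ident)

lemma sum_strip_packings_ending_Suc:
  "sum f {L \<in> strip_packings (Suc m). ends_with d (Suc m) L} =
     (\<Sum>L \<in> {L \<in> strip_packings m. \<not> ends_with d m L}. f (insert (strip_tile d m) L))"
  unfolding strip_packings_Suc_ending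
  by (rule sum.reindex[THEN trans]) (auto intro: inj_on_subset[OF inj_on_insert_strip_tile])

lemma card_insert_strip_tile:
  "L \<in> strip_packings m \<Longrightarrow> card (insert (strip_tile d m) L) = Suc (card L)"
  by (simp add: finite_strip_packing strip_tile_notin_strip_packing)

lemma card_strip_packings_ending_Suc:
  "card {L \<in> strip_packings (Suc m). ends_with d (Suc m) L} =
     card {L \<in> strip_packings m. \<not> ends_with d m L}"
  unfolding strip_packings_Suc_ending
  by (rule card_image) (auto intro: inj_on_subset[OF inj_on_insert_strip_tile])

lemma sum_card_strip_packings_ending_Suc:
  "sum card {L \<in> strip_packings (Suc m). ends_with d (Suc m) L} =
     sum card {L \<in> strip_packings m. \<not> ends_with d m L} + card {L \<in> strip_packings m. \<not> ends_with d m L}"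
proof -
  have "sum card {L \<in> strip_packings (Suc m). ends_with d (Suc m) L} =
      (\<Sum>L \<in> {L \<in> strip_packings m. \<not> ends_with d m L}. card L + 1)"
    unfolding sum_strip_packings_ending_Suc by (intro sum.cong) (simp_all add: card_insert_strip_tile)
  also have "\<dots> = sum card {L \<in> strip_packings m. \<not> ends_with d m L}
      + card {L \<in> strip_packings m. \<not> ends_with d m L}"
    by (simp only: sum.distrib) simp
  finally show ?thesis .
qed

lemma strip_packings_split_ending:
  "card (strip_packings m) =
     card {L \<in> strip_packings m. ends_with d m L} + card {L \<in> strip_packings m. \<not> ends_with d m L}"
  "sum card (strip_packings m) =
     sum card {L \<in> strip_packings m. ends_with d m L}
     + sum card {L \<in> strip_packings m. \<not> ends_with d m L}"
  using sum_filter_split[OF finite_strip_packings, of "\<lambda>_. 1 :: nat" m "ends_with d m"]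
    sum_filter_split[OF finite_strip_packings, of card m "ends_with d m"]
  by simp_all

text \<open>The second conjunct strengthens the induction; by the first, the number of packings
  ending with an orientation does not depend on the orientation.\<close>
lemma strip_packings_counts:
  "2 * sum card (strip_packings m) =
     m * card (strip_packings m) + card {L \<in> strip_packings m. ends_with d m L}
   \<and> 2 * sum card {L \<in> strip_packings m. ends_with d m L} =
     Suc m * card {L \<in> strip_packings m. ends_with d m L}"
proof (induction m arbitrary: d)
  case 0
  have "strip_packings 0 = {{}}" by (auto simp: strip_packings_def strip_tiles_def)
  then show ?case by (simp add: ends_with_def)
next
  case (Suc m)
  let ?T = "strip_packings m"
  let ?E = "\<lambda>e. {L \<in> ?T. ends_with e m L}" and ?N = "\<lambda>e. {L \<in> ?T. \<not> ends_with e m L}"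
  have IH: "2 * sum card ?T = m * card ?T + card (?E e)"
    "2 * sum card (?E e) = Suc m * card (?E e)" for e
    using Suc.IH by auto
  note split = strip_packings_split_ending[of m]
  have E_same: "card (?E e) = card (?E d)" for e
    using IH(1)[of e] IH(1)[of d] by linarith
  have N_same: "card (?N e) = card (?N d)" for e
    using split(1)[of e] split(1)[of d] E_same[of e] by linarith
  have SN_same: "sum card (?N e) = sum card (?N d)" for e
    using IH(2)[of e] IH(2)[of d] split(2)[of e] split(2)[of d] E_same[of e] by simp
  have SN_half: "2 * sum card (?N d) = m * card (?N d)"
    using IH[of d] split[of d] by (simp add: algebra_simps)
  have card_Suc: "card (strip_packings (Suc m)) = card ?T + 2 * card (?N d)"
    using sum_strip_packings_Suc[of "\<lambda>_. 1 :: nat" m] N_same[of Upward] N_same[of Downward]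
    by (simp add: card_strip_packings_ending_Suc)
  have sum_Suc:
    "sum card (strip_packings (Suc m)) = sum card ?T + 2 * (sum card (?N d) + card (?N d))"
    using sum_strip_packings_Suc[of card m] N_same[of Upward] N_same[of Downward]
      SN_same[of Upward] SN_same[of Downward]
    by (simp add: sum_card_strip_packings_ending_Suc)
  show ?case
    unfolding card_Suc sum_Suc card_strip_packings_ending_Suc sum_card_strip_packings_ending_Suc
    using IH(1)[of d] split(1)[of d] SN_half by (simp add: algebra_simps)
qed

lemma H_Suc_eq: "H (Suc m) = card (strip_packings m)"
  by (simp add: H_def num_tilings_eq_card_large_packings finite_H_region large_packings_H_region)

lemma q_Suc_eq: "q (Suc m) = sum card (strip_packings m)"
  by (simp add: q_def total_large_eq_sum_card_large_packings finite_H_region large_packings_H_region)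

lemma P_Suc_eq: "P (Suc m) = card {L \<in> strip_packings m. \<not> ends_with Upward m L}"
  by (simp add: P_def num_tilings_eq_card_large_packings finite_P_region large_packings_P_region)

lemma r_Suc_eq: "r (Suc m) = sum card {L \<in> strip_packings m. \<not> ends_with Upward m L}"
  by (simp add: r_def total_large_eq_sum_card_large_packings finite_P_region large_packings_P_region)

lemma two_q_add_P: "2 * q (Suc m) + P (Suc m) = Suc m * H (Suc m)"
  using strip_packings_counts[of m Upward] strip_packings_split_ending[of m Upward]
  by (simp add: H_Suc_eq q_Suc_eq P_Suc_eq)

lemma two_r: "2 * r (Suc m) = m * P (Suc m)"
  using strip_packings_counts[of m Upward] strip_packings_split_ending[of m Upward]
  by (simp add: r_Suc_eq P_Suc_eq algebra_simps)

theorem theorem6: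
  fixes n :: nat
  assumes "n \<ge> 1"
  shows "real (q n) = 1/2 * real n * real (H n) - 1/2 * real (P n)
       \<and> real (r n) = 1/2 * real n * real (P n) - 1/2 * real (P n)
       \<and> 1/2 * real n * real (P n) - 1/2 * real (P n) = (real n - 1) / 2 * real (P n)"
proof -
  obtain m where n: "n = Suc m" using assms by (cases n) auto
  have "2 * real (q n) + real (P n) = real n * real (H n)"
    using arg_cong[OF two_q_add_P[of m], of real] unfolding n by (simp add: algebra_simps)
  moreover have "2 * real (r n) = (real n - 1) * real (P n)"
    using arg_cong[OF two_r[of m], of real] unfolding n by (simp add: algebra_simps)
  ultimately show ?thesis by (simp add: field_simps)
qed

end
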